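(* Let $0<a\le1$. Then: (1) $\Phi_2(\sigma_1,\sigma_2,a,1,1)>0$ for $\sigma_1>0$, $\sigma_2>1$, $\sigma_1+\sigma_2>2$. (2) If $z_2\in[-1,1)$, $z_2\ne0$, then $\Phi_2(\sigma_1,\sigma_2,a,1,z_2)>0$ for $\sigma_1>1$, $\sigma_2>0$. (3) If $z_1\in[-1,1)$, $z_1\ne0$, then $\Phi_2(\sigma_1,\sigma_2,a,z_1,1)>0$ for $\sigma_1>0$, $\sigma_2>1$. (4) If $z_1,z_2\in[-1,1)$, both nonzero, then $\Phi_2(\sigma_1,\sigma_2,a,z_1,z_2)>0$ for $\sigma_1>0$, $\sigma_2>0$.
   Context: For $0<a\le1$, $s_1,s_2\in\mathbb{C}$ and $z_1,z_2\in\mathbb{C}$ with $0<|z_1|,|z_2|\le1$, the Hurwitz–Lerch type Euler–Zagier double zeta function is $$\Phi_2(s_1,s_2,a,z_1,z_2):=\sum_{m=0}^\infty\frac{z_1^m}{(m+a)^{s_1}}\sum_{n=1}^\infty\frac{z_2^{n-1}}{(m+n+a)^{s_2}},$$ convergent absolutely for $\Re s_1>0$, $\Re s_2>1$, $\Re(s_1+s_2)>2$, and understood elsewhere via its meromorphic continuation to $\mathbb{C}^2$. *)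

theory Defs
  imports "HOL-Analysis.Analysis"
begin

text \<open>Hurwitz--Lerch type Euler--Zagier double zeta function, given by its defining
  iterated series  sum_{m>=0} z1^m/(m+a)^s1 * sum_{n>=1} z2^(n-1)/(m+n+a)^s2 .
  The inner index is shifted (n-1 replaced by n, n ranging over nat from 0).
  Powers (m+a)^s are principal complex powers of positive reals.\<close>
definition Phi2 :: "complex \<Rightarrow> complex \<Rightarrow> real \<Rightarrow> complex \<Rightarrow> complex \<Rightarrow> complex" where
  "Phi2 s1 s2 a z1 z2 =
     (\<Sum>m. z1 ^ m / (of_nat m + of_real a) powr s1 *
        (\<Sum>n. z2 ^ n / (of_nat m + of_nat n + 1 + of_real a) powr s2))"

definition pos_real :: "complex \<Rightarrow> bool" where
  "pos_real w \<longleftrightarrow> Im w = 0 \<and> Re w > 0"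

end

theory Submission
  imports Defs
begin

text \<open>For real parameters, Phi2 is the real series sum_m z1^m (m+a)^(-s1) T(m) with inner sums
  T(m) = sum_n z2^n (m+n+1+a)^(-s2). A series sum_n z^n b_n with -1 <= z < 1 and weights b_n >= 0
  decreasing to 0 is nonnegative (termwise for z >= 0, by the Leibniz criterion for z < 0), and
  positive as soon as b_1 < b_0. Hence every T(m) is positive; T decreases because T(m) - T(m+1)
  is again such a series, its weights being the differences of the convex sequence x^(-s2); and
  T(m) = O((m+a)^(-p)) tends to 0, with p = s2 - 1 for z2 = 1 (integral comparison) and p = s2
  otherwise. The outer series is then positive by the same argument when z1 <> 1, and by
  comparison with sum_m (m+a)^(-(s1+p)) when z1 = 1.\<close>

lemma tendsto_shifted_powr_neg:
  fixes c s :: real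
  assumes "s > 0"
  shows "(\<lambda>n::nat. (real n + c) powr (-s)) \<longlonglongrightarrow> 0"
proof (rule tendsto_neg_powr)
  show "filterlim (\<lambda>n::nat. real n + c) at_top sequentially"
    using filterlim_tendsto_add_at_top[OF tendsto_const filterlim_real_sequentially, of c]
    by (simp add: add.commute)
qed (use assms in simp)

lemma power_weighted_series_nonneg_ratio:
  fixes z :: real and b :: "nat \<Rightarrow> real"
  assumes "0 \<le> z" "z < 1" and "\<And>n. 0 \<le> b n" and "decseq b"
  shows "summable (\<lambda>n. z^n * b n)" and "(\<Sum>n. z^n * b n) \<le> b 0 / (1 - z)"
proof -
  have le: "norm (z^n * b n) \<le> b 0 * z^n" for n
    using assms decseqD[OF \<open>decseq b\<close>, of 0 n] by (simp add: abs_mult mult.commute mult_right_mono)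
  have geom: "(\<lambda>n. b 0 * z^n) sums (b 0 / (1 - z))"
    using assms geometric_sums[of z] sums_mult[of _ _ "b 0"] by (simp add: divide_inverse)
  show summable: "summable (\<lambda>n. z^n * b n)"
    by (rule summable_comparison_test[OF _ sums_summable[OF geom]]) (use le in auto)
  have "(\<Sum>n. z^n * b n) \<le> (\<Sum>n. b 0 * z^n)"
    by (rule suminf_le[OF _ summable sums_summable[OF geom]]) (use le in \<open>auto dest: abs_le_D1\<close>)
  then show "(\<Sum>n. z^n * b n) \<le> b 0 / (1 - z)"
    using geom by (simp add: sums_iff)
qed

lemma power_weighted_series_nonpos_ratio:
  fixes z :: real and b :: "nat \<Rightarrow> real"
  assumes "-1 \<le> z" "z \<le> 0" and "\<And>n. 0 \<le> b n" and "decseq b" and "b \<longlonglongrightarrow> 0"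
  shows "summable (\<lambda>n. z^n * b n)" and "b 0 + z * b 1 \<le> (\<Sum>n. z^n * b n)"
    and "(\<Sum>n. z^n * b n) \<le> b 0"
proof -
  define c where "c n = (-z)^n * b n" for n
  have c_nonneg: "0 \<le> c n" for n
    using assms by (simp add: c_def)
  have c_mono: "c (Suc n) \<le> c n" for n
  proof -
    have "(-z)^(Suc n) * b (Suc n) \<le> (-z)^n * b (Suc n)"
      using assms by (intro mult_right_mono power_decreasing) auto
    also have "\<dots> \<le> (-z)^n * b n"
      using assms decseqD[OF \<open>decseq b\<close>, of n "Suc n"] by (intro mult_left_mono) auto
    finally show ?thesis by (simp add: c_def)
  qed
  have c_null: "c \<longlonglongrightarrow> 0"
  proof (rule real_tendsto_sandwich[OF _ _ tendsto_const \<open>b \<longlonglongrightarrow> 0\<close>])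
    have "c n \<le> b n" for n
      using assms mult_right_mono[of "(-z)^n" 1 "b n"] by (simp add: c_def power_le_one)
    then show "\<forall>\<^sub>F n in sequentially. c n \<le> b n" by simp
  qed (use c_nonneg in simp)
  have terms: "z^n * b n = (-1)^n * c n" for n
    by (simp add: c_def power_minus[symmetric])
  note leibniz = summable_Leibniz'[OF c_null c_nonneg c_mono]
  show "summable (\<lambda>n. z^n * b n)"
    unfolding terms by (rule leibniz(1))
  show "b 0 + z * b 1 \<le> (\<Sum>n. z^n * b n)"
    using leibniz(2)[of 1] by (simp add: terms c_def numeral_2_eq_2)
  show "(\<Sum>n. z^n * b n) \<le> b 0"
    using leibniz(4)[of 0] by (simp add: terms c_def)
qed

lemma power_weighted_series:
  fixes z :: real and b :: "nat \<Rightarrow> real"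
  assumes "-1 \<le> z" "z < 1" and "\<And>n. 0 \<le> b n" and "decseq b" and "b \<longlonglongrightarrow> 0"
  shows summable_power_weighted: "summable (\<lambda>n. z^n * b n)"
    and suminf_power_weighted_nonneg: "0 \<le> (\<Sum>n. z^n * b n)"
    and suminf_power_weighted_le: "(\<Sum>n. z^n * b n) \<le> b 0 / (1 - max z 0)"
    and suminf_power_weighted_pos: "b 1 < b 0 \<Longrightarrow> 0 < (\<Sum>n. z^n * b n)"
proof -
  have "summable (\<lambda>n. z^n * b n) \<and> 0 \<le> (\<Sum>n. z^n * b n) \<and>
      (\<Sum>n. z^n * b n) \<le> b 0 / (1 - max z 0) \<and> (b 1 < b 0 \<longrightarrow> 0 < (\<Sum>n. z^n * b n))"
  proof (cases "0 \<le> z")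
    case True
    note series = power_weighted_series_nonneg_ratio[OF True \<open>z < 1\<close> assms(3,4)]
    have "0 < (\<Sum>n. z^n * b n)" if "b 1 < b 0"
    proof (rule suminf_pos2[OF series(1)])
      show "0 < z^0 * b 0" using that assms(3)[of 1] by simp
    qed (use True assms(3) in simp)
    then show ?thesis
      using series True assms(3) by (auto intro: suminf_nonneg)
  next
    case False
    then have "z \<le> 0" by simp
    note series = power_weighted_series_nonpos_ratio[OF \<open>-1 \<le> z\<close> this assms(3-5)]
    have "b 0 - b 1 \<le> b 0 + z * b 1"
      using \<open>-1 \<le> z\<close> assms(3)[of 1] mult_right_mono[of "-1" z "b 1"] by simp
    moreover have "b 1 \<le> b 0"
      using decseqD[OF assms(4), of 0 1] by simp
    ultimately show ?thesis
      using series \<open>z \<le> 0\<close> by auto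
  qed
  then show "summable (\<lambda>n. z^n * b n)" "0 \<le> (\<Sum>n. z^n * b n)"
      "(\<Sum>n. z^n * b n) \<le> b 0 / (1 - max z 0)" "b 1 < b 0 \<Longrightarrow> 0 < (\<Sum>n. z^n * b n)"
    by auto
qed

lemma powr_neg_le_diff_powr:
  fixes s x :: real
  assumes "s > 1" and "x > 0"
  shows "(x + 1) powr (-s) \<le> (x powr (1 - s) - (x + 1) powr (1 - s)) / (s - 1)"
proof -
  obtain t where t: "x < t" "t < x + 1" and mvt: "(x + 1) powr (1 - s) - x powr (1 - s) = (1 - s) * t powr (-s)"
    using MVT2[of x "x + 1" "\<lambda>y. y powr (1 - s)" "\<lambda>y. (1 - s) * y powr (-s)"]
      \<open>x > 0\<close> has_real_derivative_powr[of _ "1 - s"] by auto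
  have "(x + 1) powr (-s) \<le> t powr (-s)"
    using t assms by (intro powr_mono2') auto
  then have "(s - 1) * (x + 1) powr (-s) \<le> (s - 1) * t powr (-s)"
    using assms by (intro mult_left_mono) auto
  also have "\<dots> = x powr (1 - s) - (x + 1) powr (1 - s)"
    using mvt by (simp add: algebra_simps)
  finally have "(s - 1) * (x + 1) powr (-s) \<le> x powr (1 - s) - (x + 1) powr (1 - s)" .
  with assms show ?thesis
    by (simp add: field_simps)
qed

lemma shifted_powr_neg_series:
  fixes s c :: real
  assumes "s > 1" and "c > 0"
  shows summable_shifted_powr_neg: "summable (\<lambda>n. (real n + c + 1) powr (-s))"
    and suminf_shifted_powr_neg_le: "(\<Sum>n. (real n + c + 1) powr (-s)) \<le> c powr (1 - s) / (s - 1)"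
proof -
  define h where "h n = (real n + c) powr (1 - s) / (s - 1)" for n
  have "h \<longlonglongrightarrow> 0 / (s - 1)"
    unfolding h_def using tendsto_shifted_powr_neg[of "s - 1" c] assms
    by (intro tendsto_divide) simp_all
  then have telescope: "(\<lambda>n. h n - h (Suc n)) sums (h 0)"
    using telescope_sums'[of h 0] by simp
  have le: "(real n + c + 1) powr (-s) \<le> h n - h (Suc n)" for n
    using powr_neg_le_diff_powr[OF assms(1), of "real n + c"] assms
    by (simp add: h_def diff_divide_distrib add_ac)
  show summable: "summable (\<lambda>n. (real n + c + 1) powr (-s))"
    by (rule summable_comparison_test[OF _ sums_summable[OF telescope]]) (use le in auto)
  have "(\<Sum>n. (real n + c + 1) powr (-s)) \<le> (\<Sum>n. h n - h (Suc n))"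
    by (rule suminf_le[OF le summable sums_summable[OF telescope]])
  with telescope show "(\<Sum>n. (real n + c + 1) powr (-s)) \<le> c powr (1 - s) / (s - 1)"
    by (simp add: sums_iff h_def)
qed

lemma summable_real_add_powr_neg:
  fixes a p :: real
  assumes "a > 0" and "p > 1"
  shows "summable (\<lambda>m. (real m + a) powr (-p))"
  using summable_shifted_powr_neg[OF assms(2,1)]
  by (subst summable_Suc_iff[symmetric]) (simp add: add_ac)

lemma powr_neg_diff_decreasing:
  fixes s x :: real
  assumes "s > 0" and "x > 0"
  shows "(x + 1) powr (-s) - (x + 2) powr (-s) \<le> x powr (-s) - (x + 1) powr (-s)"
proof -
  define f where "f y = y powr (-s) - (y + 1) powr (-s)" for y
  have "f (x + 1) \<le> f x"
  proof (rule DERIV_nonpos_imp_nonincreasing[of x "x + 1" f])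
    fix y assume y: "x \<le> y" "y \<le> x + 1"
    have "DERIV f y :> (-s) * y powr (-s - 1) - (-s) * (y + 1) powr (-s - 1)"
      unfolding f_def using assms y
      by (auto intro!: derivative_eq_intros has_real_derivative_powr[THEN DERIV_chain2]
          simp: has_real_derivative_powr)
    moreover have "(y + 1) powr (-s - 1) \<le> y powr (-s - 1)"
      using assms y by (intro powr_mono2') auto
    ultimately show "\<exists>d. DERIV f y :> d \<and> d \<le> 0"
      using assms by (auto simp: algebra_simps mult_left_mono)
  qed simp
  then show ?thesis by (simp add: f_def add.assoc)
qed

definition Phi2_inner :: "real \<Rightarrow> real \<Rightarrow> real \<Rightarrow> nat \<Rightarrow> real" where
  "Phi2_inner a s z m = (\<Sum>n. z^n * (real m + real n + 1 + a) powr (-s))"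

lemma tendsto_zero_if_powr_dominated:
  fixes T :: "nat \<Rightarrow> real"
  assumes "\<And>m. 0 \<le> T m" and "\<And>m. T m \<le> (real m + a) powr (-p) / C" and "p > 0"
  shows "T \<longlonglongrightarrow> 0"
  by (rule real_tendsto_sandwich[OF _ _ tendsto_const
        tendsto_divide_zero[OF tendsto_shifted_powr_neg[OF \<open>p > 0\<close>, of a], of C]])
    (use assms in auto)

lemma Phi2_inner_one:
  fixes a s :: real
  assumes "a > 0" and "s > 1"
  shows summable_Phi2_inner_one: "summable (\<lambda>n. 1^n * (real m + real n + 1 + a) powr (-s))"
    and Phi2_inner_one_pos: "0 < Phi2_inner a s 1 m"
    and Phi2_inner_one_le: "Phi2_inner a s 1 m \<le> (real m + a) powr (1 - s) / (s - 1)"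
    and decseq_Phi2_inner_one: "decseq (Phi2_inner a s 1)"
proof -
  have terms: "1^n * (real m + real n + 1 + a) powr (-s) = (real n + (real m + a) + 1) powr (-s)"
    for m n :: nat
    by (simp add: add_ac)
  have pos: "real m + a > 0" for m
    using assms by simp
  note series = shifted_powr_neg_series[OF \<open>s > 1\<close> pos]
  have summable: "summable (\<lambda>n. 1^n * (real m + real n + 1 + a) powr (-s))" for m
    unfolding terms by (rule series(1))
  then show "summable (\<lambda>n. 1^n * (real m + real n + 1 + a) powr (-s))" .
  show "0 < Phi2_inner a s 1 m"
    unfolding Phi2_inner_def by (rule suminf_pos[OF summable]) (use assms in simp)
  show "Phi2_inner a s 1 m \<le> (real m + a) powr (1 - s) / (s - 1)"
    unfolding Phi2_inner_def terms by (rule series(2))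
  have "Phi2_inner a s 1 (Suc m) = (\<Sum>n. 1^(Suc n) * (real m + real (Suc n) + 1 + a) powr (-s))" for m
    unfolding Phi2_inner_def by (simp add: add_ac)
  also have "\<dots> m = Phi2_inner a s 1 m - (real m + 1 + a) powr (-s)" for m
    unfolding Phi2_inner_def using suminf_split_head[OF summable[of m]] by simp
  finally show "decseq (Phi2_inner a s 1)"
    by (intro decseq_SucI) simp
qed

lemma Phi2_inner_bounds:
  fixes a s z :: real
  assumes "a > 0" and "s > 0" and "-1 \<le> z" "z < 1"
  shows summable_Phi2_inner: "summable (\<lambda>n. z^n * (real m + real n + 1 + a) powr (-s))"
    and Phi2_inner_pos: "0 < Phi2_inner a s z m"
    and Phi2_inner_le: "Phi2_inner a s z m \<le> (real m + a) powr (-s) / (1 - max z 0)"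
proof -
  define b where "b n = (real n + (real m + 1 + a)) powr (-s)" for n
  have terms: "(\<lambda>n. z^n * (real m + real n + 1 + a) powr (-s)) = (\<lambda>n. z^n * b n)"
    by (simp add: b_def add_ac)
  have b_nonneg: "0 \<le> b n" for n
    by (simp add: b_def)
  have b_dec: "decseq b"
    unfolding b_def using assms by (intro decseq_SucI powr_mono2') auto
  have b_null: "b \<longlonglongrightarrow> 0"
    unfolding b_def by (rule tendsto_shifted_powr_neg[OF \<open>s > 0\<close>])
  note series = power_weighted_series[OF \<open>-1 \<le> z\<close> \<open>z < 1\<close> b_nonneg b_dec b_null]
  show "summable (\<lambda>n. z^n * (real m + real n + 1 + a) powr (-s))"
    unfolding terms by (rule series(1))
  have "b 1 < b 0"
    unfolding b_def using assms by (intro powr_less_mono2_neg) auto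
  then show "0 < Phi2_inner a s z m"
    unfolding Phi2_inner_def terms by (rule series(4))
  have "b 0 \<le> (real m + a) powr (-s)"
    unfolding b_def using assms by (intro powr_mono2') auto
  then have "b 0 / (1 - max z 0) \<le> (real m + a) powr (-s) / (1 - max z 0)"
    using assms by (intro divide_right_mono) auto
  with series(3) show "Phi2_inner a s z m \<le> (real m + a) powr (-s) / (1 - max z 0)"
    unfolding Phi2_inner_def terms by linarith
qed

lemma decseq_Phi2_inner:
  fixes a s z :: real
  assumes "a > 0" and "s > 0" and "-1 \<le> z" "z < 1"
  shows "decseq (Phi2_inner a s z)"
proof (rule decseq_SucI)
  fix m
  define b where "b n = (real m + real n + 1 + a) powr (-s)" for n
  define d where "d n = b n - b (Suc n)" for n
  have shift: "(real (Suc m) + real n + 1 + a) powr (-s) = b (Suc n)" for n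
    by (simp add: b_def)
  have "d n \<ge> 0" for n
    unfolding d_def b_def using assms by (intro diff_ge_0_iff_ge[THEN iffD2] powr_mono2') auto
  moreover have "decseq d"
    using powr_neg_diff_decreasing[OF \<open>s > 0\<close>, of "real m + real _ + 1 + a"] assms
    by (intro decseq_SucI) (simp add: d_def b_def add_ac numeral_2_eq_2)
  moreover have "b \<longlonglongrightarrow> 0"
    unfolding b_def using tendsto_shifted_powr_neg[OF \<open>s > 0\<close>, of "real m + 1 + a"]
    by (simp add: add_ac)
  then have "d \<longlonglongrightarrow> 0"
    unfolding d_def using tendsto_diff[OF _ LIMSEQ_Suc] by fastforce
  ultimately have "0 \<le> (\<Sum>n. z^n * d n)"
    by (rule suminf_power_weighted_nonneg[OF \<open>-1 \<le> z\<close> \<open>z < 1\<close>])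
  also have "\<dots> = Phi2_inner a s z m - Phi2_inner a s z (Suc m)"
    using suminf_diff[OF summable_Phi2_inner[OF assms, of m] summable_Phi2_inner[OF assms, of "Suc m"]]
    by (simp add: Phi2_inner_def shift d_def b_def algebra_simps)
  finally show "Phi2_inner a s z (Suc m) \<le> Phi2_inner a s z m"
    by simp
qed

lemma Phi2_outer_series_pos:
  fixes a s1 z :: real and T :: "nat \<Rightarrow> real"
  assumes "a > 0" and "s1 > 0" and "-1 \<le> z" "z < 1"
    and "\<And>m. 0 < T m" and "decseq T" and "T \<longlonglongrightarrow> 0"
  shows "summable (\<lambda>m. z^m * ((real m + a) powr (-s1) * T m))"
    and "0 < (\<Sum>m. z^m * ((real m + a) powr (-s1) * T m))"
proof -
  define b where "b m = (real m + a) powr (-s1) * T m" for m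
  have b_nonneg: "0 \<le> b m" for m
    using assms(5)[of m] by (simp add: b_def)
  have powr_dec: "decseq (\<lambda>m. (real m + a) powr (-s1))"
    using assms by (intro decseq_SucI powr_mono2') auto
  have "b (Suc m) \<le> b m" for m
    unfolding b_def using decseqD[OF powr_dec, of m "Suc m"] decseqD[OF \<open>decseq T\<close>, of m "Suc m"]
      assms(5)[of "Suc m"] by (intro mult_mono) auto
  then have b_dec: "decseq b"
    by (rule decseq_SucI)
  have b_null: "b \<longlonglongrightarrow> 0"
    unfolding b_def using tendsto_mult[OF tendsto_shifted_powr_neg[OF \<open>s1 > 0\<close>] \<open>T \<longlonglongrightarrow> 0\<close>]
    by simp
  have "b 1 \<le> (1 + a) powr (-s1) * T 0"
    unfolding b_def using decseqD[OF \<open>decseq T\<close>, of 0 1] by (simp add: mult_left_mono)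
  also have "\<dots> < b 0"
    unfolding b_def using assms(1,2) assms(5)[of 0] by (simp add: powr_less_mono2_neg)
  finally have "b 1 < b 0" .
  with power_weighted_series[OF \<open>-1 \<le> z\<close> \<open>z < 1\<close> b_nonneg b_dec b_null]
  show "summable (\<lambda>m. z^m * ((real m + a) powr (-s1) * T m))"
    and "0 < (\<Sum>m. z^m * ((real m + a) powr (-s1) * T m))"
    unfolding b_def by auto
qed

lemma Phi2_outer_series_one_pos:
  fixes a s1 p C :: real and T :: "nat \<Rightarrow> real"
  assumes "a > 0" and "\<And>m. 0 < T m" and "\<And>m. T m \<le> (real m + a) powr (-p) / C"
    and "C > 0" and "s1 + p > 1"
  shows "summable (\<lambda>m. 1^m * ((real m + a) powr (-s1) * T m))"
    and "0 < (\<Sum>m. 1^m * ((real m + a) powr (-s1) * T m))"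
proof -
  have terms_pos: "0 < 1^m * ((real m + a) powr (-s1) * T m)" for m
    using assms(1,2) by simp
  have "1^m * ((real m + a) powr (-s1) * T m) \<le> (real m + a) powr (-s1) * ((real m + a) powr (-p) / C)"
    for m
    using mult_left_mono[OF assms(3)[of m], of "(real m + a) powr (-s1)"] by simp
  also have "\<dots> m = (real m + a) powr (-(s1 + p)) / C" for m
    using assms(1) by (simp add: powr_add[symmetric] add_ac)
  finally have terms_le: "1^m * ((real m + a) powr (-s1) * T m) \<le> (real m + a) powr (-(s1 + p)) / C"
    for m .
  have "summable (\<lambda>m. (real m + a) powr (-(s1 + p)) / C)"
    using assms by (intro summable_divide summable_real_add_powr_neg) auto
  then show summable: "summable (\<lambda>m. 1^m * ((real m + a) powr (-s1) * T m))"
    by (rule summable_comparison_test'[where N = 0]) (use terms_pos terms_le in \<open>simp add: abs_of_pos\<close>)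
  show "0 < (\<Sum>m. 1^m * ((real m + a) powr (-s1) * T m))"
    by (rule suminf_pos[OF summable terms_pos])
qed

lemma Phi2_of_real:
  fixes a s1 s2 z1 z2 :: real
  assumes "a > 0" and "\<And>m. summable (\<lambda>n. z2^n * (real m + real n + 1 + a) powr (-s2))"
    and "summable (\<lambda>m. z1^m * ((real m + a) powr (-s1) * Phi2_inner a s2 z2 m))"
  shows "Phi2 (of_real s1) (of_real s2) a (of_real z1) (of_real z2) =
      of_real (\<Sum>m. z1^m * ((real m + a) powr (-s1) * Phi2_inner a s2 z2 m))"
proof -
  have "(of_real z2 ^ n / (of_nat m + of_nat n + 1 + of_real a) powr of_real s2 :: complex)
      = of_real (z2^n * (real m + real n + 1 + a) powr (-s2))" for m n
  proof -
    have "(of_nat m + of_nat n + 1 + of_real a :: complex) = of_real (real m + real n + 1 + a)"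
      by simp
    then show ?thesis
      using assms(1) powr_of_real[of "real m + real n + 1 + a" s2] by (simp add: powr_minus divide_inverse)
  qed
  then have inner: "(\<Sum>n. of_real z2 ^ n / (of_nat m + of_nat n + 1 + of_real a) powr of_real s2)
      = (of_real (Phi2_inner a s2 z2 m) :: complex)" for m
    unfolding Phi2_inner_def by (simp add: suminf_of_real[OF assms(2)[of m]])
  have "(of_real z1 ^ m / (of_nat m + of_real a) powr of_real s1 :: complex)
      = of_real (z1^m * (real m + a) powr (-s1))" for m
  proof -
    have "(of_nat m + of_real a :: complex) = of_real (real m + a)"
      by simp
    then show ?thesis
      using assms(1) powr_of_real[of "real m + a" s1] by (simp add: powr_minus divide_inverse)
  qed
  then show ?thesis
    unfolding Phi2_def inner by (simp add: suminf_of_real[OF assms(3)] mult.assoc)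
qed

lemma pos_real_Phi2_of_real:
  fixes a s1 s2 z1 z2 :: real
  assumes "a > 0" and "\<And>m. summable (\<lambda>n. z2^n * (real m + real n + 1 + a) powr (-s2))"
    and "summable (\<lambda>m. z1^m * ((real m + a) powr (-s1) * Phi2_inner a s2 z2 m))"
    and "0 < (\<Sum>m. z1^m * ((real m + a) powr (-s1) * Phi2_inner a s2 z2 m))"
  shows "pos_real (Phi2 (of_real s1) (of_real s2) a (of_real z1) (of_real z2))"
  using Phi2_of_real[OF assms(1-3)] assms(4) by (simp add: pos_real_def)

lemma pos_real_Phi2_one_one:
  fixes a s1 s2 :: real
  assumes a: "0 < a" and s2: "s2 > 1" and s: "s1 + s2 > 2"
  shows "pos_real (Phi2 (of_real s1) (of_real s2) a 1 1)"
proof -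
  have "Phi2_inner a s2 1 m \<le> (real m + a) powr (-(s2 - 1)) / (s2 - 1)" for m
    using Phi2_inner_one_le[OF a s2] by simp
  note outer = Phi2_outer_series_one_pos[OF a Phi2_inner_one_pos[OF a s2] this]
  show ?thesis
    using pos_real_Phi2_of_real[OF a summable_Phi2_inner_one[OF a s2] outer] s s2 by simp
qed

lemma pos_real_Phi2_one_real:
  fixes a z2 s1 s2 :: real
  assumes a: "0 < a" and z2: "-1 \<le> z2" "z2 < 1" and s1: "s1 > 1" and s2: "s2 > 0"
  shows "pos_real (Phi2 (of_real s1) (of_real s2) a 1 (of_real z2))"
proof -
  note outer = Phi2_outer_series_one_pos[OF a Phi2_inner_pos[OF a s2 z2] Phi2_inner_le[OF a s2 z2]]
  show ?thesis
    using pos_real_Phi2_of_real[OF a summable_Phi2_inner[OF a s2 z2] outer] s1 s2 z2 by simp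
qed

lemma pos_real_Phi2_real_one:
  fixes a z1 s1 s2 :: real
  assumes a: "0 < a" and z1: "-1 \<le> z1" "z1 < 1" and s1: "s1 > 0" and s2: "s2 > 1"
  shows "pos_real (Phi2 (of_real s1) (of_real s2) a (of_real z1) 1)"
proof -
  have "Phi2_inner a s2 1 \<longlonglongrightarrow> 0"
    using Phi2_inner_one_pos[OF a s2] Phi2_inner_one_le[OF a s2] s2
    by (intro tendsto_zero_if_powr_dominated[where p = "s2 - 1"]) (auto simp: less_imp_le)
  note outer = Phi2_outer_series_pos[OF a s1 z1 Phi2_inner_one_pos[OF a s2]
      decseq_Phi2_inner_one[OF a s2] this]
  show ?thesis
    using pos_real_Phi2_of_real[OF a summable_Phi2_inner_one[OF a s2] outer] by simp
qed

lemma pos_real_Phi2_real_real: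
  fixes a z1 z2 s1 s2 :: real
  assumes a: "0 < a" and z1: "-1 \<le> z1" "z1 < 1" and z2: "-1 \<le> z2" "z2 < 1"
    and s1: "s1 > 0" and s2: "s2 > 0"
  shows "pos_real (Phi2 (of_real s1) (of_real s2) a (of_real z1) (of_real z2))"
proof -
  have "Phi2_inner a s2 z2 \<longlonglongrightarrow> 0"
    using Phi2_inner_pos[OF a s2 z2] Phi2_inner_le[OF a s2 z2] s2
    by (intro tendsto_zero_if_powr_dominated[where p = s2]) (auto simp: less_imp_le)
  note outer = Phi2_outer_series_pos[OF a s1 z1 Phi2_inner_pos[OF a s2 z2]
      decseq_Phi2_inner[OF a s2 z2] this]
  show ?thesis
    by (rule pos_real_Phi2_of_real[OF a summable_Phi2_inner[OF a s2 z2] outer])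
qed

theorem lemma3p7:
  fixes a :: real
  assumes "0 < a" and "a \<le> 1"
  shows
    "(\<forall>\<sigma>1 \<sigma>2 :: real. \<sigma>1 > 0 \<and> \<sigma>2 > 1 \<and> \<sigma>1 + \<sigma>2 > 2 \<longrightarrow>
        pos_real (Phi2 (of_real \<sigma>1) (of_real \<sigma>2) a 1 1))
   \<and> (\<forall>z2 \<sigma>1 \<sigma>2 :: real. -1 \<le> z2 \<and> z2 < 1 \<and> z2 \<noteq> 0 \<and> \<sigma>1 > 1 \<and> \<sigma>2 > 0 \<longrightarrow>
        pos_real (Phi2 (of_real \<sigma>1) (of_real \<sigma>2) a 1 (of_real z2)))
   \<and> (\<forall>z1 \<sigma>1 \<sigma>2 :: real. -1 \<le> z1 \<and> z1 < 1 \<and> z1 \<noteq> 0 \<and> \<sigma>1 > 0 \<and> \<sigma>2 > 1 \<longrightarrow>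
        pos_real (Phi2 (of_real \<sigma>1) (of_real \<sigma>2) a (of_real z1) 1))
   \<and> (\<forall>z1 z2 \<sigma>1 \<sigma>2 :: real. -1 \<le> z1 \<and> z1 < 1 \<and> z1 \<noteq> 0 \<and> -1 \<le> z2 \<and> z2 < 1 \<and> z2 \<noteq> 0
        \<and> \<sigma>1 > 0 \<and> \<sigma>2 > 0 \<longrightarrow>
        pos_real (Phi2 (of_real \<sigma>1) (of_real \<sigma>2) a (of_real z1) (of_real z2)))"
  using pos_real_Phi2_one_one[OF \<open>0 < a\<close>] pos_real_Phi2_one_real[OF \<open>0 < a\<close>]
    pos_real_Phi2_real_one[OF \<open>0 < a\<close>] pos_real_Phi2_real_real[OF \<open>0 < a\<close>] by simp

end
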